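(* Let $g$ be a left-invariant Riemannian metric on $SU(2)$. Then there are left-invariant vector fields $X_1,X_2,X_3$ on $SU(2)$ with $[X_1,X_2]=X_3$, $[X_2,X_3]=X_1$, $[X_3,X_1]=X_2$ (a Milnor frame) and positive numbers $f_1,f_2,f_3$ such that $g=f_1^2\,\omega_1\otimes\omega_1+f_2^2\,\omega_2\otimes\omega_2+f_3^2\,\omega_3\otimes\omega_3$, where $\omega_i$ is the one-form dual to $X_i$. Moreover, $g$ passes to an $SU(2)$-invariant Riemannian metric on $SU(2)/\mathbb{Z}_n$ if and only if one of the following holds: (i) $n\in\{1,2\}$; (ii) $n=4$, and after possibly altering the choice of diagonalising Milnor frame, $X_1$ is a scalar multiple of $u_1$ and $\mathrm{span}\{X_2,X_3\}=\mathrm{span}\{u_2,u_3\}$; (iii) $n\in\mathbb{N}\setminus\{1,2,4\}$, and the diagonalising Milnor frame can be chosen with $X_i=\frac{u_i}{2}$, and in this basis $f_2=f_3$.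
   Context: $SU(2)=\{\begin{pmatrix}a&-\bar b\\ b&\bar a\end{pmatrix}: |a|^2+|b|^2=1\}$ with Lie algebra spanned by $u_1=\begin{pmatrix}i&0\\0&-i\end{pmatrix}$, $u_2=\begin{pmatrix}0&i\\ i&0\end{pmatrix}$, $u_3=\begin{pmatrix}0&-1\\1&0\end{pmatrix}$, satisfying $[u_1,u_2]=2u_3$, $[u_2,u_3]=2u_1$, $[u_3,u_1]=2u_2$. $\mathbb{Z}_n=\{\mathrm{diag}(e^{2\pi ik/n},e^{-2\pi ik/n}):k=0,\dots,n-1\}$ acts on $SU(2)$ by right multiplication, and $SU(2)/\mathbb{Z}_n$ carries the left $SU(2)$-action; a left-invariant metric "passes to" the quotient if it induces a Riemannian metric on $SU(2)/\mathbb{Z}_n$, which is then $SU(2)$-invariant. *)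

theory Defs
  imports "HOL-Analysis.Analysis"
begin

type_synonym cmat = "complex^2^2"

definition su2 :: "cmat set" where
  "su2 = {A. (\<forall>i j. cnj (A$i$j) = - (A$j$i)) \<and> A$1$1 + A$2$2 = 0}"

definition lie :: "cmat \<Rightarrow> cmat \<Rightarrow> cmat" where
  "lie A B = A ** B - B ** A"

definition u1 :: cmat where
  "u1 = (\<chi> i j. if i = j then (if i = 1 then \<i> else - \<i>) else 0)"

definition u2 :: cmat where
  "u2 = (\<chi> i j. if i = j then 0 else \<i>)"

definition u3 :: cmat where
  "u3 = (\<chi> i j. if i = j then 0 else (if i = 1 then -1 else 1))"

text \<open>A left-invariant Riemannian metric on SU(2) is identified with its value at the
identity: an inner product (symmetric, real-bilinear, positive definite form) on su(2).\<close>

definition left_inv_metric :: "(cmat \<Rightarrow> cmat \<Rightarrow> real) \<Rightarrow> bool" where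
  "left_inv_metric g \<longleftrightarrow>
     (\<forall>X\<in>su2. \<forall>Y\<in>su2. g X Y = g Y X) \<and>
     (\<forall>X\<in>su2. \<forall>Y\<in>su2. \<forall>Z\<in>su2. \<forall>a b::real.
        g (a *\<^sub>R X + b *\<^sub>R Y) Z = a * g X Z + b * g Y Z) \<and>
     (\<forall>X\<in>su2. X \<noteq> 0 \<longrightarrow> g X X > 0)"

definition milnor_frame :: "cmat \<Rightarrow> cmat \<Rightarrow> cmat \<Rightarrow> bool" where
  "milnor_frame X1 X2 X3 \<longleftrightarrow>
     X1 \<in> su2 \<and> X2 \<in> su2 \<and> X3 \<in> su2 \<and>
     (\<forall>a b c::real. a *\<^sub>R X1 + b *\<^sub>R X2 + c *\<^sub>R X3 = 0 \<longrightarrow> a = 0 \<and> b = 0 \<and> c = 0) \<and>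
     lie X1 X2 = X3 \<and> lie X2 X3 = X1 \<and> lie X3 X1 = X2"

text \<open>g = f1^2 w1 (x) w1 + f2^2 w2 (x) w2 + f3^2 w3 (x) w3, where w_i is the dual one-form:
w_i(a1 X1 + a2 X2 + a3 X3) = a_i.\<close>

definition diag_milnor ::
  "(cmat \<Rightarrow> cmat \<Rightarrow> real) \<Rightarrow> cmat \<Rightarrow> cmat \<Rightarrow> cmat \<Rightarrow> real \<Rightarrow> real \<Rightarrow> real \<Rightarrow> bool" where
  "diag_milnor g X1 X2 X3 f1 f2 f3 \<longleftrightarrow>
     milnor_frame X1 X2 X3 \<and> f1 > 0 \<and> f2 > 0 \<and> f3 > 0 \<and>
     (\<forall>a1 a2 a3 b1 b2 b3::real.
        g (a1 *\<^sub>R X1 + a2 *\<^sub>R X2 + a3 *\<^sub>R X3) (b1 *\<^sub>R X1 + b2 *\<^sub>R X2 + b3 *\<^sub>R X3)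
        = f1^2 * a1 * b1 + f2^2 * a2 * b2 + f3^2 * a3 * b3)"

definition zn :: "nat \<Rightarrow> int \<Rightarrow> cmat" where
  "zn n k = (\<chi> i j. if i = j then
        (if i = 1 then exp (2 * pi * \<i> * of_int k / of_nat n)
                  else exp (- (2 * pi * \<i> * of_int k / of_nat n)))
      else 0)"

text \<open>A left-invariant metric passes to SU(2)/Z_n (Z_n acting by right multiplication)
iff right translations by elements h of Z_n are isometries, i.e. iff the inner product
at the identity is Ad(h)-invariant, Ad(h) X = h X h^{-1}.\<close>

definition passes_to_quotient :: "nat \<Rightarrow> (cmat \<Rightarrow> cmat \<Rightarrow> real) \<Rightarrow> bool" where
  "passes_to_quotient n g \<longleftrightarrow>
     (\<forall>k<n. \<forall>X\<in>su2. \<forall>Y\<in>su2.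
        g (zn n (int k) ** X ** zn n (- int k)) (zn n (int k) ** Y ** zn n (- int k)) = g X Y)"

end

theory Submission
  imports Defs
begin

text \<open>The basis \<open>u\<^sub>i/2\<close> of su(2) satisfies Milnor's bracket relations, so it identifies su(2)
  with \<open>(\<real>\<^sup>3, \<times>)\<close>; a left-invariant metric becomes a positive definite symmetric form on
  \<open>\<real>\<^sup>3\<close>, and every positively oriented orthonormal frame diagonalising this form (found by
  maximising the form on unit spheres) is a diagonalising Milnor frame. Conjugation by the
  k-th element of \<open>\<int>\<^sub>n\<close> acts as the rotation by \<open>4\<pi>k/n\<close> about the \<open>u\<^sub>1\<close>-axis, so the metric
  descends to \<open>SU(2)/\<int>\<^sub>n\<close> iff its Gram matrix is invariant under these rotations. For n = 1, 2
  they are trivial; for n = 4 the only nontrivial one is the rotation by \<open>\<pi>\<close>, whose invariants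
  are the forms making \<open>u\<^sub>1\<close> orthogonal to \<open>u\<^sub>2, u\<^sub>3\<close>; for all other n the rotation by \<open>4\<pi>/n\<close>
  is not a half turn, and its invariant forms are those with Gram matrix \<open>diag(a, b, b)\<close>.\<close>

section \<open>Coordinates on su(2)\<close>

definition su2_of_vec :: "real^3 \<Rightarrow> cmat" where
  "su2_of_vec x = (x$1 / 2) *\<^sub>R u1 + (x$2 / 2) *\<^sub>R u2 + (x$3 / 2) *\<^sub>R u3"

lemma su2_of_vec_entries [simp]:
  "su2_of_vec x $1$1 = \<i> * of_real (x$1 / 2)"
  "su2_of_vec x $2$2 = - \<i> * of_real (x$1 / 2)"
  "su2_of_vec x $1$2 = \<i> * of_real (x$2 / 2) - of_real (x$3 / 2)"
  "su2_of_vec x $2$1 = \<i> * of_real (x$2 / 2) + of_real (x$3 / 2)"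
  by (simp_all add: su2_of_vec_def u1_def u2_def u3_def complex_eq_iff)

lemma cmat_eq_iff: "A = B \<longleftrightarrow> A$1$1 = B$1$1 \<and> A$1$2 = B$1$2 \<and> A$2$1 = B$2$1 \<and> A$2$2 = B$2$2"
  for A B :: cmat
  by (auto simp: vec_eq_iff forall_2)

lemma linear_su2_of_vec: "linear su2_of_vec"
  by (rule linearI) (simp_all add: cmat_eq_iff complex_eq_iff field_simps)

lemma su2_of_vec_eq_0_iff [simp]: "su2_of_vec x = 0 \<longleftrightarrow> x = 0"
  by (auto simp: cmat_eq_iff complex_eq_iff vec_eq_iff forall_3)

lemma su2_eq_range_su2_of_vec: "su2 = range su2_of_vec"
proof (intro set_eqI iffI)
  fix X assume "X \<in> su2"
  then have skew: "\<And>i j. cnj (X$i$j) = - X$j$i" and trace: "X$1$1 + X$2$2 = 0"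
    by (auto simp: su2_def)
  have "Re (X$1$1) = 0" using skew[of 1 1] by (simp add: complex_eq_iff)
  moreover have "X$2$1 = - cnj (X$1$2)" using skew[of 1 2] by simp
  moreover have "X$2$2 = - X$1$1" using trace by (simp add: add_eq_0_iff)
  ultimately have "X = su2_of_vec (vector [2 * Im (X$1$1), 2 * Im (X$1$2), - 2 * Re (X$1$2)])"
    by (simp add: cmat_eq_iff complex_eq_iff)
  then show "X \<in> range su2_of_vec" by blast
qed (auto simp: su2_def forall_2 complex_eq_iff)

lemma su2_of_vec_in_su2 [simp]: "su2_of_vec x \<in> su2"
  by (simp add: su2_eq_range_su2_of_vec)

lemma u_in_su2: "u1 \<in> su2" "u2 \<in> su2" "u3 \<in> su2"
  by (auto simp: su2_def u1_def u2_def u3_def forall_2)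

lemma subspace_su2: "subspace su2"
  by (simp add: su2_eq_range_su2_of_vec linear_su2_of_vec subspace_UNIV linear_subspace_image)

lemma lie_su2_of_vec: "lie (su2_of_vec a) (su2_of_vec b) = su2_of_vec (cross3 a b)"
  by (simp add: cmat_eq_iff lie_def matrix_matrix_mult_def sum_2 cross_components complex_eq_iff
      field_simps)

lemma su2_of_vec_axis:
  "su2_of_vec (axis 1 1) = (1/2) *\<^sub>R u1"
  "su2_of_vec (axis 2 1) = (1/2) *\<^sub>R u2"
  "su2_of_vec (axis 3 1) = (1/2) *\<^sub>R u3"
  by (simp_all add: su2_of_vec_def axis_def)

section \<open>Rotations about the first axis\<close>

definition rot_x :: "real \<Rightarrow> real^3 \<Rightarrow> real^3" where
  "rot_x t x = vector [x$1, cos t * x$2 - sin t * x$3, sin t * x$2 + cos t * x$3]"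

definition torus :: "real \<Rightarrow> cmat" where
  "torus t = (\<chi> i j. if i = j then (if i = 1 then cis t else cis (- t)) else 0)"

lemma zn_eq_torus: "zn n k = torus (2 * pi * k / n)"
  unfolding zn_def torus_def cis_conv_exp
  by (intro arg_cong[where f = vec_lambda] ext) (simp add: field_simps)

lemma torus_conj_su2_of_vec: "torus t ** su2_of_vec x ** torus (- t) = su2_of_vec (rot_x (2 * t) x)"
proof -
  have "sin t * sin t + cos t * cos t = 1"
    using sin_cos_squared_add[of t] by (simp add: power2_eq_square)
  then show ?thesis
    by (simp add: cmat_eq_iff matrix_matrix_mult_def sum_2 torus_def rot_x_def complex_eq_iff
        sin_double cos_double power2_eq_square) algebra
qed

lemma zn_conj_su2_of_vec:
  "zn n k ** su2_of_vec x ** zn n (- k) = su2_of_vec (rot_x (4 * pi * k / n) x)"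
  using torus_conj_su2_of_vec[of "2 * pi * k / n" x] by (simp add: zn_eq_torus mult.assoc)

lemma rot_x_eq_id: "cos t = 1 \<Longrightarrow> rot_x t x = x"
  by (simp add: rot_x_def vec_eq_iff forall_3 cos_one_sin_zero)

definition rot_x_invariant :: "real^3^3 \<Rightarrow> real \<Rightarrow> bool" where
  "rot_x_invariant M t \<longleftrightarrow> (\<forall>x y. rot_x t x \<bullet> (M *v rot_x t y) = x \<bullet> (M *v y))"

lemma inner_matrix_vector_mult_eq_sum:
  "x \<bullet> (M *v y) = (\<Sum>i\<in>UNIV. \<Sum>j\<in>UNIV. x$i * M$i$j * y$j)" for M :: "real^'n^'m"
  by (simp add: inner_vec_def matrix_vector_mult_def sum_distrib_left mult.assoc)

lemma plane_rotation_fixed_point: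
  fixes a b c s :: real
  assumes "a * c + b * s = a" "b * c - a * s = b" and "c \<noteq> 1"
  shows "a = 0 \<and> b = 0"
proof -
  have "((c - 1)^2 + s^2) * a = (c - 1) * (a * c + b * s - a) - s * (b * c - a * s - b)"
    and "((c - 1)^2 + s^2) * b = s * (a * c + b * s - a) + (c - 1) * (b * c - a * s - b)"
    by (simp_all add: power2_eq_square algebra_simps)
  then have "((c - 1)^2 + s^2) * a = 0" "((c - 1)^2 + s^2) * b = 0"
    using assms(1,2) by simp_all
  moreover have "(c - 1)^2 + s^2 \<noteq> 0"
    using \<open>c \<noteq> 1\<close> by (simp add: sum_power2_eq_zero_iff)
  ultimately show ?thesis by auto
qed

lemma plane_rotation_invariant_quadratic_form:
  fixes p q r c s :: real
  assumes "c^2 + s^2 = 1"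
    and "p * c^2 + 2 * r * s * c + q * s^2 = p"
    and "(q - p) * s * c + r * (c^2 - s^2) = r"
    and "s \<noteq> 0"
  shows "r = 0 \<and> p = q"
proof -
  have "s * (q - p) = 0" "s * r = 0"
    using assms(1-3) by algebra+
  then show ?thesis using \<open>s \<noteq> 0\<close> by simp
qed

lemma symmetric_matrix_entry: "transpose M = M \<Longrightarrow> M$j$i = M$i$j"
  unfolding transpose_def vec_eq_iff by simp

lemma rot_x_invariant_imp_first_row:
  assumes inv: "rot_x_invariant M t" and "cos t \<noteq> 1"
  shows "M$1$2 = 0 \<and> M$1$3 = 0"
proof (rule plane_rotation_fixed_point)
  show "M$1$2 * cos t + M$1$3 * sin t = M$1$2"
    using inv[unfolded rot_x_invariant_def, rule_format, of "vector [1,0,0]" "vector [0,1,0]"]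
    by (simp add: inner_matrix_vector_mult_eq_sum sum_3 rot_x_def)
  show "M$1$3 * cos t - M$1$2 * sin t = M$1$3"
    using inv[unfolded rot_x_invariant_def, rule_format, of "vector [1,0,0]" "vector [0,0,1]"]
    by (simp add: inner_matrix_vector_mult_eq_sum sum_3 rot_x_def)
qed (fact \<open>cos t \<noteq> 1\<close>)

lemma rot_x_invariant_imp_isotropic:
  assumes sym: "transpose M = M" and inv: "rot_x_invariant M t" and "sin t \<noteq> 0"
  shows "M$2$3 = 0 \<and> M$2$2 = M$3$3"
proof -
  define c s where "c = cos t" and "s = sin t"
  have "M$3$2 = M$2$3" by (rule symmetric_matrix_entry[OF sym])
  then have "M$2$2 * c^2 + 2 * M$2$3 * s * c + M$3$3 * s^2 = M$2$2"
        and "(M$3$3 - M$2$2) * s * c + M$2$3 * (c^2 - s^2) = M$2$3"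
    using inv[unfolded rot_x_invariant_def, rule_format, of "vector [0,1,0]" "vector [0,1,0]"]
      inv[unfolded rot_x_invariant_def, rule_format, of "vector [0,1,0]" "vector [0,0,1]"]
    by (simp_all add: inner_matrix_vector_mult_eq_sum sum_3 rot_x_def c_def[symmetric] s_def[symmetric]
        power2_eq_square algebra_simps)
  moreover have "c^2 + s^2 = 1" by (simp add: c_def s_def)
  ultimately show ?thesis
    using plane_rotation_invariant_quadratic_form \<open>sin t \<noteq> 0\<close> s_def by blast
qed

lemma rot_x_invariant_if_first_row:
  assumes sym: "transpose M = M" and "M$1$2 = 0" "M$1$3 = 0" and "sin t = 0"
  shows "rot_x_invariant M t"
  unfolding rot_x_invariant_def
proof (intro allI)
  fix x y :: "real^3"
  define c where "c = cos t"
  have "M$2$1 = 0" "M$3$1 = 0" using symmetric_matrix_entry[OF sym] assms(2,3) by metis+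
  have "c * c = 1"
    using sin_cos_squared_add[of t] \<open>sin t = 0\<close> by (simp add: c_def power2_eq_square)
  have "rot_x t x \<bullet> (M *v rot_x t y) = x$1 * M$1$1 * y$1
      + (c * c) * (x$2 * M$2$2 * y$2 + x$2 * M$2$3 * y$3 + x$3 * M$3$2 * y$2 + x$3 * M$3$3 * y$3)"
    using assms(2-4) \<open>M$2$1 = 0\<close> \<open>M$3$1 = 0\<close>
    by (simp add: rot_x_def c_def[symmetric] inner_matrix_vector_mult_eq_sum sum_3 algebra_simps)
  also have "\<dots> = x \<bullet> (M *v y)"
    using assms(2,3) \<open>M$2$1 = 0\<close> \<open>M$3$1 = 0\<close> \<open>c * c = 1\<close>
    by (simp add: inner_matrix_vector_mult_eq_sum sum_3)
  finally show "rot_x t x \<bullet> (M *v rot_x t y) = x \<bullet> (M *v y)" .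
qed

lemma rot_x_invariant_if_isotropic:
  assumes sym: "transpose M = M" and "M$1$2 = 0" "M$1$3 = 0" "M$2$3 = 0" "M$2$2 = M$3$3"
  shows "rot_x_invariant M t"
  unfolding rot_x_invariant_def
proof (intro allI)
  fix x y :: "real^3"
  define c s where "c = cos t" and "s = sin t"
  have "M$2$1 = 0" "M$3$1 = 0" "M$3$2 = 0"
    using symmetric_matrix_entry[OF sym] assms(2-4) by metis+
  have "c * c + s * s = 1"
    using sin_cos_squared_add[of t] by (simp add: c_def s_def power2_eq_square)
  have "rot_x t x \<bullet> (M *v rot_x t y) = x$1 * M$1$1 * y$1
      + (c * c + s * s) * M$3$3 * (x$2 * y$2 + x$3 * y$3)"
    using assms(2-5) \<open>M$2$1 = 0\<close> \<open>M$3$1 = 0\<close> \<open>M$3$2 = 0\<close>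
    by (simp add: rot_x_def c_def[symmetric] s_def[symmetric] inner_matrix_vector_mult_eq_sum sum_3
        algebra_simps)
  also have "\<dots> = x \<bullet> (M *v y)"
    using assms(2-5) \<open>M$2$1 = 0\<close> \<open>M$3$1 = 0\<close> \<open>M$3$2 = 0\<close> \<open>c * c + s * s = 1\<close>
    by (simp add: inner_matrix_vector_mult_eq_sum sum_3 algebra_simps)
  finally show "rot_x t x \<bullet> (M *v rot_x t y) = x \<bullet> (M *v y)" .
qed

definition zn_invariant :: "nat \<Rightarrow> real^3^3 \<Rightarrow> bool" where
  "zn_invariant n M \<longleftrightarrow> (\<forall>k<n. rot_x_invariant M (4 * pi * k / n))"

lemma sin_4pi_div_nonzero:
  fixes n :: nat
  assumes "n \<ge> 3" "n \<noteq> 4"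
  shows "sin (4 * pi / n) \<noteq> 0"
proof
  assume "sin (4 * pi / n) = 0"
  then obtain i :: int where "4 * pi / n = i * pi"
    using sin_zero_iff_int2 by blast
  then have "real_of_int 4 = real_of_int (i * int n)"
    using \<open>n \<ge> 3\<close> by (simp add: field_simps)
  then have "n dvd 4"
    by (metis of_int_eq_iff dvd_triv_right int_dvd_int_iff of_nat_numeral)
  then have "n \<le> 4" by (simp add: dvd_imp_le)
  with assms have "n = 3" by simp
  with \<open>n dvd 4\<close> show False by simp
qed

lemma zn_invariant_trivial: "n \<in> {1, 2} \<Longrightarrow> zn_invariant n M"
  by (auto simp: zn_invariant_def rot_x_invariant_def less_2_cases_iff rot_x_eq_id)

lemma zn_invariant_4_iff:
  assumes "transpose M = M"
  shows "zn_invariant 4 M \<longleftrightarrow> M$1$2 = 0 \<and> M$1$3 = 0"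
proof
  assume "zn_invariant 4 M"
  then have "rot_x_invariant M pi" by (auto simp: zn_invariant_def dest: spec[of _ 1])
  then show "M$1$2 = 0 \<and> M$1$3 = 0" by (rule rot_x_invariant_imp_first_row) simp
next
  assume "M$1$2 = 0 \<and> M$1$3 = 0"
  then show "zn_invariant 4 M"
    using assms by (auto simp: zn_invariant_def intro: rot_x_invariant_if_first_row)
qed

lemma zn_invariant_iff_isotropic:
  assumes "transpose M = M" and "n \<ge> 3" "n \<noteq> 4"
  shows "zn_invariant n M \<longleftrightarrow> M$1$2 = 0 \<and> M$1$3 = 0 \<and> M$2$3 = 0 \<and> M$2$2 = M$3$3"
proof
  assume "zn_invariant n M"
  then have inv: "rot_x_invariant M (4 * pi / n)"
    using \<open>n \<ge> 3\<close> by (auto simp: zn_invariant_def dest: spec[of _ 1])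
  have "sin (4 * pi / n) \<noteq> 0" using sin_4pi_div_nonzero assms(2,3) .
  moreover from this have "cos (4 * pi / n) \<noteq> 1"
    using cos_one_sin_zero by blast
  ultimately show "M$1$2 = 0 \<and> M$1$3 = 0 \<and> M$2$3 = 0 \<and> M$2$2 = M$3$3"
    using rot_x_invariant_imp_first_row[OF inv] rot_x_invariant_imp_isotropic[OF assms(1) inv]
    by blast
qed (use assms(1) in \<open>auto simp: zn_invariant_def intro: rot_x_invariant_if_isotropic\<close>)

section \<open>Diagonalising symmetric bilinear forms\<close>

lemma quadratic_nonpos_imp_linear_coeff_zero:
  fixes c d :: real
  assumes "\<And>t. 2 * t * c + t^2 * d \<le> 0"
  shows "c = 0"
proof -
  define D where "D = \<bar>d\<bar> + 1"
  have "D > 0" "2 * D + d > 0" by (auto simp: D_def)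
  have "2 * (c / D) * c + (c / D)^2 * d \<le> 0" by (rule assms)
  then have "c^2 * (2 * D + d) / D^2 \<le> 0"
    using \<open>D > 0\<close> by (simp add: field_simps power2_eq_square)
  then have "c^2 * (2 * D + d) \<le> 0"
    using \<open>D > 0\<close> by (simp add: divide_le_0_iff)
  then have "c^2 \<le> 0"
    using \<open>2 * D + d > 0\<close> by (simp add: mult_le_0_iff)
  then show "c = 0" by simp
qed

text \<open>A maximiser of the quadratic form on the unit sphere of V is an eigenvector: perturbing
  it within the sphere cannot increase the form to first order.\<close>

lemma symmetric_bilinear_unit_eigenvector:
  fixes B :: "'a::euclidean_space \<Rightarrow> 'a \<Rightarrow> real"
  assumes bil: "bilinear B" and sym: "\<And>x y. B x y = B y x"
    and "subspace V" and "V \<noteq> {0}"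
  obtains e where "e \<in> V" "norm e = 1" "\<And>y. y \<in> V \<Longrightarrow> e \<bullet> y = 0 \<Longrightarrow> B e y = 0"
proof -
  obtain v where "v \<in> V" "v \<noteq> 0" using \<open>subspace V\<close> \<open>V \<noteq> {0}\<close> subspace_0 by blast
  then have "(1 / norm v) *\<^sub>R v \<in> V \<inter> sphere 0 1"
    using \<open>subspace V\<close> by (simp add: subspace_scale)
  then have "V \<inter> sphere 0 1 \<noteq> {}" by blast
  moreover have "compact (V \<inter> sphere 0 1)"
    using \<open>subspace V\<close> by (simp add: closed_subspace closed_Int_compact)
  moreover have "continuous_on (V \<inter> sphere 0 1) (\<lambda>z. B z z)"
    by (intro bilinear_continuous_on_compose[OF _ _ bil] continuous_on_id)
  ultimately obtain e where "e \<in> V \<inter> sphere 0 1" and max: "\<forall>z \<in> V \<inter> sphere 0 1. B z z \<le> B e e"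
    using continuous_attains_sup[of "V \<inter> sphere 0 1" "\<lambda>z. B z z"] by blast
  then have e: "e \<in> V" "norm e = 1" by auto
  have bound: "B z z \<le> B e e * (z \<bullet> z)" if "z \<in> V" for z
  proof (cases "z = 0")
    case True
    then show ?thesis by (simp add: bilinear_lzero[OF bil])
  next
    case False
    have "B ((1 / norm z) *\<^sub>R z) ((1 / norm z) *\<^sub>R z) \<le> B e e"
      using False \<open>z \<in> V\<close> \<open>subspace V\<close> max by (simp add: subspace_scale)
    then have "B z z / (norm z)^2 \<le> B e e"
      by (simp add: bilinear_lmul[OF bil] bilinear_rmul[OF bil] power2_eq_square)
    then show ?thesis
      using False by (simp add: divide_le_eq power2_norm_eq_inner)
  qed
  have "B e y = 0" if "y \<in> V" "e \<bullet> y = 0" for y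
  proof (rule quadratic_nonpos_imp_linear_coeff_zero)
    fix t :: real
    have "e + t *\<^sub>R y \<in> V" using e(1) \<open>y \<in> V\<close> \<open>subspace V\<close>
      by (simp add: subspace_add subspace_scale)
    then have "B (e + t *\<^sub>R y) (e + t *\<^sub>R y) \<le> B e e * ((e + t *\<^sub>R y) \<bullet> (e + t *\<^sub>R y))"
      by (rule bound)
    moreover have "e \<bullet> e = 1" using e(2) by (simp add: norm_eq_1)
    ultimately show "2 * t * B e y + t^2 * (B y y - B e e * (y \<bullet> y)) \<le> 0"
      using \<open>e \<bullet> y = 0\<close> sym[of y e]
      by (simp add: bilinear_ladd[OF bil] bilinear_radd[OF bil] bilinear_lmul[OF bil]
          bilinear_rmul[OF bil] inner_add_left inner_add_right inner_commute power2_eq_square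
          algebra_simps)
  qed
  then show thesis using that e by blast
qed

definition diagonalising_frame :: "(real^3 \<Rightarrow> real^3 \<Rightarrow> real) \<Rightarrow> real^3 \<Rightarrow> real^3 \<Rightarrow> bool" where
  "diagonalising_frame B e1 e2 \<longleftrightarrow>
     norm e1 = 1 \<and> norm e2 = 1 \<and> e1 \<bullet> e2 = 0 \<and>
     B e1 e2 = 0 \<and> B e1 (cross3 e1 e2) = 0 \<and> B e2 (cross3 e1 e2) = 0"

lemma diagonalising_frame_extend:
  fixes B :: "real^3 \<Rightarrow> real^3 \<Rightarrow> real"
  assumes bil: "bilinear B" and sym: "\<And>x y. B x y = B y x"
    and "norm e1 = 1" and e1: "\<And>y. e1 \<bullet> y = 0 \<Longrightarrow> B e1 y = 0"
  obtains e2 where "diagonalising_frame B e1 e2"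
proof -
  define V where "V = {x. e1 \<bullet> x = 0}"
  have "subspace V" unfolding V_def by (rule subspace_hyperplane)
  obtain k where "cross3 e1 (axis k 1) \<noteq> 0"
    using cross_basis_nonzero \<open>norm e1 = 1\<close> by (metis norm_zero zero_neq_one)
  moreover have "cross3 e1 (axis k 1) \<in> V" by (simp add: V_def dot_cross_self)
  ultimately have "V \<noteq> {0}" by blast
  then obtain e2 where "e2 \<in> V" "norm e2 = 1" and e2: "\<And>y. y \<in> V \<Longrightarrow> e2 \<bullet> y = 0 \<Longrightarrow> B e2 y = 0"
    using symmetric_bilinear_unit_eigenvector[OF bil sym \<open>subspace V\<close>] by blast
  have "B e2 (cross3 e1 e2) = 0"
    by (rule e2) (simp_all add: V_def dot_cross_self)
  moreover have "e1 \<bullet> e2 = 0" using \<open>e2 \<in> V\<close> by (simp add: V_def)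
  ultimately have "diagonalising_frame B e1 e2"
    using \<open>norm e1 = 1\<close> \<open>norm e2 = 1\<close> e1 by (simp add: diagonalising_frame_def dot_cross_self)
  then show thesis by (rule that)
qed

lemma diagonalising_frame_exists:
  fixes B :: "real^3 \<Rightarrow> real^3 \<Rightarrow> real"
  assumes bil: "bilinear B" and sym: "\<And>x y. B x y = B y x"
  obtains e1 e2 where "diagonalising_frame B e1 e2"
proof -
  obtain e1 where "norm e1 = 1" "\<And>y. e1 \<bullet> y = 0 \<Longrightarrow> B e1 y = 0"
    using symmetric_bilinear_unit_eigenvector[OF bil sym subspace_UNIV]
    by (metis UNIV_I UNIV_not_singleton)
  then show thesis using diagonalising_frame_extend[OF bil sym] that by blast
qed

section \<open>Milnor frames of left-invariant metrics\<close>

lemma orthonormal_cross3: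
  assumes "norm e1 = 1" "norm e2 = 1" "e1 \<bullet> e2 = 0"
  shows "norm (cross3 e1 e2) = 1"
    and "cross3 e2 (cross3 e1 e2) = e1" and "cross3 (cross3 e1 e2) e1 = e2"
proof -
  have "(norm (cross3 e1 e2))^2 = 1"
    using norm_cross_dot[of e1 e2] assms by simp
  then show "norm (cross3 e1 e2) = 1"
    using norm_ge_zero[of "cross3 e1 e2"] by (auto simp: power2_eq_1_iff)
  have "e1 \<bullet> e1 = 1" "e2 \<bullet> e2 = 1" using assms(1,2) by (simp_all add: norm_eq_1)
  then show "cross3 e2 (cross3 e1 e2) = e1" "cross3 (cross3 e1 e2) e1 = e2"
    using assms(3) by (simp_all add: Lagrange cross_skew[of _ e1] inner_commute)
qed

lemma milnor_frame_su2_of_vec: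
  assumes "norm e1 = 1" "norm e2 = 1" "e1 \<bullet> e2 = 0"
  shows "milnor_frame (su2_of_vec e1) (su2_of_vec e2) (su2_of_vec (cross3 e1 e2))"
proof -
  define e3 where "e3 = cross3 e1 e2"
  have unit: "e1 \<bullet> e1 = 1" "e2 \<bullet> e2 = 1" "e3 \<bullet> e3 = 1"
    using assms orthonormal_cross3(1)[OF assms] by (simp_all add: norm_eq_1 e3_def)
  have orth: "e1 \<bullet> e2 = 0" "e1 \<bullet> e3 = 0" "e2 \<bullet> e3 = 0"
    using assms(3) by (simp_all add: e3_def dot_cross_self)
  have "a = 0 \<and> b = 0 \<and> c = 0"
    if "a *\<^sub>R su2_of_vec e1 + b *\<^sub>R su2_of_vec e2 + c *\<^sub>R su2_of_vec e3 = 0" for a b c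
  proof -
    have "a *\<^sub>R e1 + b *\<^sub>R e2 + c *\<^sub>R e3 = 0"
      using that by (simp add: linear_add[OF linear_su2_of_vec] linear_scale[OF linear_su2_of_vec]
          flip: su2_of_vec_eq_0_iff)
    then have "e1 \<bullet> (a *\<^sub>R e1 + b *\<^sub>R e2 + c *\<^sub>R e3) = 0"
      and "e2 \<bullet> (a *\<^sub>R e1 + b *\<^sub>R e2 + c *\<^sub>R e3) = 0"
      and "e3 \<bullet> (a *\<^sub>R e1 + b *\<^sub>R e2 + c *\<^sub>R e3) = 0" by simp_all
    then show ?thesis
      using unit orth by (simp add: inner_add_right inner_commute)
  qed
  then show ?thesis
    using orthonormal_cross3(2,3)[OF assms]
    by (simp add: milnor_frame_def lie_su2_of_vec e3_def)
qed

lemma span_rotated_pair: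
  fixes a b :: "'a::real_vector"
  assumes "p^2 + q^2 \<noteq> 0"
  shows "span {p *\<^sub>R a + q *\<^sub>R b, (- q) *\<^sub>R a + p *\<^sub>R b} = span {a, b}"
proof -
  define v w where "v = p *\<^sub>R a + q *\<^sub>R b" and "w = (- q) *\<^sub>R a + p *\<^sub>R b"
  have "(p^2 + q^2) *\<^sub>R a = p *\<^sub>R v - q *\<^sub>R w"
    and "(p^2 + q^2) *\<^sub>R b = q *\<^sub>R v + p *\<^sub>R w"
    by (simp_all add: v_def w_def power2_eq_square algebra_simps)
  then have "a = (1 / (p^2 + q^2)) *\<^sub>R (p *\<^sub>R v - q *\<^sub>R w)"
    and "b = (1 / (p^2 + q^2)) *\<^sub>R (q *\<^sub>R v + p *\<^sub>R w)"
    using assms by (metis scaleR_scaleR divide_self_if times_divide_eq_left mult_1 scaleR_one)+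
  then have "a \<in> span {v, w}" "b \<in> span {v, w}"
    by (simp_all add: span_scale span_diff span_add span_base)
  moreover have "v \<in> span {a, b}" "w \<in> span {a, b}"
    unfolding v_def w_def by (simp_all add: span_scale span_add span_diff span_base)
  ultimately show ?thesis
    unfolding v_def[symmetric] w_def[symmetric] span_eq by blast
qed

lemma diag_milnorD:
  assumes "diag_milnor g X1 X2 X3 f1 f2 f3"
  shows "g X1 X2 = 0" "g X1 X3 = 0" "g X2 X3 = 0"
    and "g X1 X1 = f1^2" "g X2 X2 = f2^2" "g X3 X3 = f3^2"
proof -
  have eq: "\<And>a1 a2 a3 b1 b2 b3. g (a1 *\<^sub>R X1 + a2 *\<^sub>R X2 + a3 *\<^sub>R X3) (b1 *\<^sub>R X1 + b2 *\<^sub>R X2 + b3 *\<^sub>R X3)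
      = f1^2 * a1 * b1 + f2^2 * a2 * b2 + f3^2 * a3 * b3"
    using assms by (simp add: diag_milnor_def)
  show "g X1 X2 = 0" using eq[of 1 0 0 0 1 0] by simp
  show "g X1 X3 = 0" using eq[of 1 0 0 0 0 1] by simp
  show "g X2 X3 = 0" using eq[of 0 1 0 0 0 1] by simp
  show "g X1 X1 = f1^2" using eq[of 1 0 0 1 0 0] by simp
  show "g X2 X2 = f2^2" using eq[of 0 1 0 0 1 0] by simp
  show "g X3 X3 = f3^2" using eq[of 0 0 1 0 0 1] by simp
qed

locale su2_metric =
  fixes g :: "cmat \<Rightarrow> cmat \<Rightarrow> real"
  assumes left_inv_metric: "left_inv_metric g"
begin

lemma g_sym: "X \<in> su2 \<Longrightarrow> Y \<in> su2 \<Longrightarrow> g X Y = g Y X"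
  using left_inv_metric by (simp add: left_inv_metric_def)

lemma g_linear_left:
  "X \<in> su2 \<Longrightarrow> Y \<in> su2 \<Longrightarrow> Z \<in> su2 \<Longrightarrow> g (a *\<^sub>R X + b *\<^sub>R Y) Z = a * g X Z + b * g Y Z"
  using left_inv_metric by (simp add: left_inv_metric_def)

lemma g_pos: "X \<in> su2 \<Longrightarrow> X \<noteq> 0 \<Longrightarrow> g X X > 0"
  using left_inv_metric by (simp add: left_inv_metric_def)

lemma g_scaleR: "X \<in> su2 \<Longrightarrow> Y \<in> su2 \<Longrightarrow> g (a *\<^sub>R X) (b *\<^sub>R Y) = a * b * g X Y"
  using g_linear_left[of X X "b *\<^sub>R Y" a 0] g_linear_left[of Y Y X b 0] g_sym subspace_su2
  by (simp add: subspace_scale)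

lemma subspace_g_orthogonal: "X \<in> su2 \<Longrightarrow> subspace {Y \<in> su2. g X Y = 0}"
  using subspace_su2 g_scaleR[of X X 1 0] g_linear_left[of _ _ X 1 1] g_linear_left[of _ _ X _ 0] g_sym
  by (auto simp: subspace_def)

definition form :: "real^3 \<Rightarrow> real^3 \<Rightarrow> real" where
  "form x y = g (su2_of_vec x) (su2_of_vec y)"

lemma form_sym: "form x y = form y x"
  by (simp add: form_def g_sym)

lemma bilinear_form: "bilinear form"
proof -
  have "linear (\<lambda>x. form x y)" for y
    using g_linear_left[of _ _ "su2_of_vec y" 1 1] g_scaleR[of _ "su2_of_vec y" _ 1]
    by (intro linearI) (simp_all add: form_def linear_add[OF linear_su2_of_vec]
        linear_scale[OF linear_su2_of_vec])
  then show ?thesis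
    by (simp add: bilinear_def form_sym[of _ "_ :: real^3"])
qed

lemma form_pos: "x \<noteq> 0 \<Longrightarrow> form x x > 0"
  by (simp add: form_def g_pos)

definition gram :: "real^3^3" where
  "gram = (\<chi> i j. form (axis i 1) (axis j 1))"

lemma symmetric_gram: "transpose gram = gram"
  by (simp add: transpose_def gram_def form_sym vec_eq_iff)

lemma form_eq_gram: "form x y = x \<bullet> (gram *v y)"
proof -
  have "bilinear (\<lambda>x y. x \<bullet> (gram *v y))"
    by (simp add: bilinear_def linear_iff inner_add_left inner_add_right
        matrix_vector_right_distrib matrix_vector_mult_scaleR)
  then have "form = (\<lambda>x y. x \<bullet> (gram *v y))"
    by (rule bilinear_eq_stdbasis[OF bilinear_form])
      (auto simp: Basis_vec_def gram_def inner_axis' matrix_vector_mult_basis column_def)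
  then show ?thesis by simp
qed

lemma form_axis: "form (axis i 1) (axis j 1) = gram$i$j"
  by (simp add: gram_def)

lemma passes_to_quotient_iff_zn_invariant: "passes_to_quotient n g \<longleftrightarrow> zn_invariant n gram"
proof -
  have "passes_to_quotient n g \<longleftrightarrow> (\<forall>k<n. \<forall>x y. g (zn n (int k) ** su2_of_vec x ** zn n (- int k))
      (zn n (int k) ** su2_of_vec y ** zn n (- int k)) = g (su2_of_vec x) (su2_of_vec y))"
    by (simp add: passes_to_quotient_def su2_eq_range_su2_of_vec)
  also have "\<dots> \<longleftrightarrow> (\<forall>k<n. \<forall>x y. form (rot_x (4 * pi * k / n) x) (rot_x (4 * pi * k / n) y) = form x y)"
    by (simp add: zn_conj_su2_of_vec form_def)
  also have "\<dots> \<longleftrightarrow> zn_invariant n gram"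
    by (simp add: zn_invariant_def rot_x_invariant_def form_eq_gram)
  finally show ?thesis .
qed

lemma diag_milnor_diagonalising_frame:
  assumes "diagonalising_frame form e1 e2"
  defines "e3 \<equiv> cross3 e1 e2"
  shows "diag_milnor g (su2_of_vec e1) (su2_of_vec e2) (su2_of_vec e3)
    (sqrt (form e1 e1)) (sqrt (form e2 e2)) (sqrt (form e3 e3))"
proof -
  have unit: "norm e1 = 1" "norm e2 = 1" "e1 \<bullet> e2 = 0"
    and diag: "form e1 e2 = 0" "form e1 e3 = 0" "form e2 e3 = 0"
    using assms by (simp_all add: diagonalising_frame_def)
  then have "e1 \<noteq> 0" "e2 \<noteq> 0" "e3 \<noteq> 0"
    using orthonormal_cross3(1)[OF unit] by (auto simp: e3_def)
  then have pos: "form e1 e1 > 0" "form e2 e2 > 0" "form e3 e3 > 0"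
    by (simp_all add: form_pos)
  have "g (a1 *\<^sub>R su2_of_vec e1 + a2 *\<^sub>R su2_of_vec e2 + a3 *\<^sub>R su2_of_vec e3)
          (b1 *\<^sub>R su2_of_vec e1 + b2 *\<^sub>R su2_of_vec e2 + b3 *\<^sub>R su2_of_vec e3)
        = form e1 e1 * a1 * b1 + form e2 e2 * a2 * b2 + form e3 e3 * a3 * b3"
    for a1 a2 a3 b1 b2 b3
  proof -
    have "g (a1 *\<^sub>R su2_of_vec e1 + a2 *\<^sub>R su2_of_vec e2 + a3 *\<^sub>R su2_of_vec e3)
            (b1 *\<^sub>R su2_of_vec e1 + b2 *\<^sub>R su2_of_vec e2 + b3 *\<^sub>R su2_of_vec e3)
          = form (a1 *\<^sub>R e1 + a2 *\<^sub>R e2 + a3 *\<^sub>R e3) (b1 *\<^sub>R e1 + b2 *\<^sub>R e2 + b3 *\<^sub>R e3)"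
      by (simp add: form_def linear_add[OF linear_su2_of_vec] linear_scale[OF linear_su2_of_vec])
    also have "\<dots> = form e1 e1 * a1 * b1 + form e2 e2 * a2 * b2 + form e3 e3 * a3 * b3"
      using diag form_sym[of e2 e1] form_sym[of e3 e1] form_sym[of e3 e2]
      by (simp add: bilinear_ladd[OF bilinear_form] bilinear_radd[OF bilinear_form]
          bilinear_lmul[OF bilinear_form] bilinear_rmul[OF bilinear_form] algebra_simps)
    finally show ?thesis .
  qed
  then show ?thesis
    unfolding diag_milnor_def using milnor_frame_su2_of_vec[OF unit, folded e3_def] pos
    by (simp add: less_imp_le)
qed

lemma exists_diag_milnor: "\<exists>X1 X2 X3 f1 f2 f3. diag_milnor g X1 X2 X3 f1 f2 f3"
proof -
  obtain e1 e2 where "diagonalising_frame form e1 e2"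
    using diagonalising_frame_exists[OF bilinear_form form_sym] .
  from diag_milnor_diagonalising_frame[OF this] show ?thesis by blast
qed

lemma diag_milnor_standard_iff:
  "(\<exists>f1 f2 f3. diag_milnor g ((1/2) *\<^sub>R u1) ((1/2) *\<^sub>R u2) ((1/2) *\<^sub>R u3) f1 f2 f3 \<and> f2 = f3)
   \<longleftrightarrow> gram$1$2 = 0 \<and> gram$1$3 = 0 \<and> gram$2$3 = 0 \<and> gram$2$2 = gram$3$3"
proof
  assume "\<exists>f1 f2 f3. diag_milnor g ((1/2) *\<^sub>R u1) ((1/2) *\<^sub>R u2) ((1/2) *\<^sub>R u3) f1 f2 f3 \<and> f2 = f3"
  then obtain f1 f2 where "diag_milnor g ((1/2) *\<^sub>R u1) ((1/2) *\<^sub>R u2) ((1/2) *\<^sub>R u3) f1 f2 f2"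
    by blast
  from diag_milnorD[OF this] show "gram$1$2 = 0 \<and> gram$1$3 = 0 \<and> gram$2$3 = 0 \<and> gram$2$2 = gram$3$3"
    by (simp add: gram_def form_def su2_of_vec_axis)
next
  assume gram: "gram$1$2 = 0 \<and> gram$1$3 = 0 \<and> gram$2$3 = 0 \<and> gram$2$2 = gram$3$3"
  then have "diagonalising_frame form (axis 1 1) (axis 2 1)"
    by (simp add: diagonalising_frame_def cross_basis form_axis inner_axis_axis)
  from diag_milnor_diagonalising_frame[OF this] gram
  show "\<exists>f1 f2 f3. diag_milnor g ((1/2) *\<^sub>R u1) ((1/2) *\<^sub>R u2) ((1/2) *\<^sub>R u3) f1 f2 f3 \<and> f2 = f3"
    by (auto simp: cross_basis su2_of_vec_axis form_axis)
qed

lemma diag_milnor_u1_iff: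
  "(\<exists>X1 X2 X3 f1 f2 f3. diag_milnor g X1 X2 X3 f1 f2 f3 \<and>
      (\<exists>c::real. X1 = c *\<^sub>R u1) \<and> span {X2, X3} = span {u2, u3})
   \<longleftrightarrow> gram$1$2 = 0 \<and> gram$1$3 = 0"
proof
  assume "\<exists>X1 X2 X3 f1 f2 f3. diag_milnor g X1 X2 X3 f1 f2 f3 \<and>
      (\<exists>c::real. X1 = c *\<^sub>R u1) \<and> span {X2, X3} = span {u2, u3}"
  then obtain X1 X2 X3 f1 f2 f3 c where d: "diag_milnor g X1 X2 X3 f1 f2 f3"
    and X1: "X1 = c *\<^sub>R u1" and span: "span {X2, X3} = span {u2, u3}"
    by blast
  have mf: "milnor_frame X1 X2 X3" using d by (simp add: diag_milnor_def)
  then have "X1 \<noteq> 0" unfolding milnor_frame_def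
    by (metis add.right_neutral scaleR_one scaleR_zero_left zero_neq_one)
  then have "c \<noteq> 0" using X1 by auto
  have "span {X2, X3} \<subseteq> {Y \<in> su2. g X1 Y = 0}"
    using mf diag_milnorD(1,2)[OF d]
    by (intro span_minimal subspace_g_orthogonal) (auto simp: milnor_frame_def)
  then have "g X1 u2 = 0" "g X1 u3 = 0"
    using span by (auto simp: span_base)
  moreover have "g X1 u2 = c * g u1 u2" "g X1 u3 = c * g u1 u3"
    using g_scaleR[of u1 u2 c 1] g_scaleR[of u1 u3 c 1] X1 u_in_su2 by simp_all
  ultimately have "g u1 u2 = 0" "g u1 u3 = 0"
    using \<open>c \<noteq> 0\<close> by simp_all
  then show "gram$1$2 = 0 \<and> gram$1$3 = 0"
    by (simp add: gram_def form_def su2_of_vec_axis g_scaleR u_in_su2)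
next
  assume gram: "gram$1$2 = 0 \<and> gram$1$3 = 0"
  have "form (axis 1 1) y = 0" if "axis 1 1 \<bullet> y = 0" for y
    using that gram
    by (simp add: form_eq_gram inner_axis' matrix_vector_mult_def sum_3)
  then obtain e2 where frame: "diagonalising_frame form (axis 1 1) e2"
    using diagonalising_frame_extend[OF bilinear_form form_sym] by (metis norm_axis_1)
  define p q where "p = e2$2 / 2" and "q = e2$3 / 2"
  have "e2$1 = 0"
    using frame by (simp add: diagonalising_frame_def inner_axis')
  then have X2: "su2_of_vec e2 = p *\<^sub>R u2 + q *\<^sub>R u3"
    and X3: "su2_of_vec (cross3 (axis 1 1) e2) = (- q) *\<^sub>R u2 + p *\<^sub>R u3"
    by (simp_all add: su2_of_vec_def p_def q_def cross_components axis_def)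
  have "p^2 + q^2 \<noteq> 0"
  proof -
    have "e2 \<bullet> e2 = 1" using frame by (simp add: diagonalising_frame_def norm_eq_1)
    with \<open>e2$1 = 0\<close> show ?thesis
      by (simp add: inner_vec_def sum_3 p_def q_def power2_eq_square)
  qed
  then have "span {su2_of_vec e2, su2_of_vec (cross3 (axis 1 1) e2)} = span {u2, u3}"
    unfolding X2 X3 by (rule span_rotated_pair)
  with diag_milnor_diagonalising_frame[OF frame, unfolded su2_of_vec_axis]
  show "\<exists>X1 X2 X3 f1 f2 f3. diag_milnor g X1 X2 X3 f1 f2 f3 \<and>
      (\<exists>c::real. X1 = c *\<^sub>R u1) \<and> span {X2, X3} = span {u2, u3}"
    by blast
qed

end

theorem proposition2p1:
  fixes g :: "cmat \<Rightarrow> cmat \<Rightarrow> real" and n :: nat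
  assumes "left_inv_metric g" and "n \<ge> 1"
  shows "(\<exists>X1 X2 X3 f1 f2 f3. diag_milnor g X1 X2 X3 f1 f2 f3) \<and>
    (passes_to_quotient n g \<longleftrightarrow>
       n \<in> {1, 2} \<or>
       (n = 4 \<and> (\<exists>X1 X2 X3 f1 f2 f3. diag_milnor g X1 X2 X3 f1 f2 f3 \<and>
                    (\<exists>c::real. X1 = c *\<^sub>R u1) \<and> span {X2, X3} = span {u2, u3})) \<or>
       (n \<notin> {1, 2, 4} \<and> (\<exists>f1 f2 f3.
          diag_milnor g ((1/2) *\<^sub>R u1) ((1/2) *\<^sub>R u2) ((1/2) *\<^sub>R u3) f1 f2 f3 \<and> f2 = f3)))"
proof -
  interpret su2_metric g using assms(1) by (rule su2_metric.intro)
  consider "n \<in> {1, 2}" | "n = 4" | "n \<ge> 3" "n \<noteq> 4" using \<open>n \<ge> 1\<close> by fastforce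
  then show ?thesis
  proof cases
    case 1
    then show ?thesis
      using exists_diag_milnor zn_invariant_trivial passes_to_quotient_iff_zn_invariant by blast
  next
    case 2
    have "passes_to_quotient 4 g \<longleftrightarrow> (\<exists>X1 X2 X3 f1 f2 f3. diag_milnor g X1 X2 X3 f1 f2 f3 \<and>
        (\<exists>c::real. X1 = c *\<^sub>R u1) \<and> span {X2, X3} = span {u2, u3})"
      by (simp only: passes_to_quotient_iff_zn_invariant zn_invariant_4_iff[OF symmetric_gram]
          diag_milnor_u1_iff)
    then show ?thesis using 2 exists_diag_milnor by simp
  next
    case 3
    have "passes_to_quotient n g \<longleftrightarrow> (\<exists>f1 f2 f3.
        diag_milnor g ((1/2) *\<^sub>R u1) ((1/2) *\<^sub>R u2) ((1/2) *\<^sub>R u3) f1 f2 f3 \<and> f2 = f3)"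
      by (simp only: passes_to_quotient_iff_zn_invariant zn_invariant_iff_isotropic[OF symmetric_gram 3]
          diag_milnor_standard_iff)
    then show ?thesis using 3 exists_diag_milnor by simp
  qed
qed

end
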